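(* Let $m=m_n\ge1$ and $F=F_n$ be such that $(F)_2\lesssim(F)_0$ and $\mu=\log n-\frac mn(F)_1\to-\infty$ as $n\to\infty$. Then $H^*_{nmF}$ is connected with probability tending to one.
   Context: Shotgun random hypergraph: given integers $n,m\ge1$ and probability distributions $f^{(1)},\dots,f^{(m)}$ on $\{0,\dots,n\}$, write $F=f^{(1)}\times\cdots\times f^{(m)}$. $H^*_{nmF}$ is the random hypergraph with node set $\{1,\dots,n\}$ and hyperedge set $\{V_1,\dots,V_m\}$, where $V_1,\dots,V_m\subset\{1,\dots,n\}$ are mutually independent and $\mathbb{P}(V_k=A)=f^{(k)}(|A|)\binom{n}{|A|}^{-1}$. A hypergraph on node set $V$ is connected if for every partition of $V$ into nonempty sets $V_1',V_2'$ some hyperedge meets both. Moments: $(F)_r=\frac1m\sum_{k=1}^m\sum_{x=2}^n x^r f^{(k)}(x)$. $a_n\lesssim b_n$ means $\limsup a_n/|b_n|<\infty$. *)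

theory Defs
  imports "HOL-Analysis.Analysis"
begin

definition is_dist_family :: "nat \<Rightarrow> nat \<Rightarrow> (nat \<Rightarrow> nat \<Rightarrow> real) \<Rightarrow> bool" where
  "is_dist_family n m g \<longleftrightarrow>
     (\<forall>k\<in>{1..m}. (\<forall>x. 0 \<le> g k x) \<and> (\<Sum>x\<in>{0..n}. g k x) = 1)"

definition hg_connected :: "nat \<Rightarrow> nat \<Rightarrow> (nat \<Rightarrow> nat set) \<Rightarrow> bool" where
  "hg_connected n m V \<longleftrightarrow>
     (\<forall>A B. A \<noteq> {} \<and> B \<noteq> {} \<and> A \<inter> B = {} \<and> A \<union> B = {1..n} \<longrightarrow>
        (\<exists>k\<in>{1..m}. V k \<inter> A \<noteq> {} \<and> V k \<inter> B \<noteq> {}))"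

text \<open>P(V_k = A) = g k |A| / binom(n,|A|), V_1..V_m independent.\<close>
definition edge_prob :: "nat \<Rightarrow> (nat \<Rightarrow> nat \<Rightarrow> real) \<Rightarrow> nat \<Rightarrow> nat set \<Rightarrow> real" where
  "edge_prob n g k A = g k (card A) / real (n choose card A)"

definition prob_connected :: "nat \<Rightarrow> nat \<Rightarrow> (nat \<Rightarrow> nat \<Rightarrow> real) \<Rightarrow> real" where
  "prob_connected n m g =
     (\<Sum>V\<in>PiE {1..m} (\<lambda>_. Pow {1..n}).
        (if hg_connected n m V then (\<Prod>k\<in>{1..m}. edge_prob n g k (V k)) else 0))"

definition moment :: "nat \<Rightarrow> nat \<Rightarrow> nat \<Rightarrow> (nat \<Rightarrow> nat \<Rightarrow> real) \<Rightarrow> real" where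
  "moment r n m g = (1 / real m) * (\<Sum>k\<in>{1..m}. \<Sum>x\<in>{2..n}. real x ^ r * g k x)"

definition lesssim :: "(nat \<Rightarrow> real) \<Rightarrow> (nat \<Rightarrow> real) \<Rightarrow> bool" where
  "lesssim a b \<longleftrightarrow> limsup (\<lambda>n. ereal (a n / \<bar>b n\<bar>)) < \<infinity>"

end

theory Submission
  imports Defs
begin

text \<open>
  If \<open>H\<^sup>*\<close> is disconnected, some nonempty proper \<open>S\<close> is such that no hyperedge crosses the cut
  \<open>(S, {1..n} - S)\<close>. By independence this has probability at most \<open>exp (- E\<^sub>s)\<close>, where \<open>E\<^sub>s\<close> is the
  expected number of crossing hyperedges and \<open>s = |S|\<close>. With \<open>t = min s (n - s) / n\<close> one has
  \<open>E\<^sub>s \<ge> m t (F)\<^sub>0\<close> and \<open>E\<^sub>s \<ge> m (t (F)\<^sub>1 - t\<^sup>2 (F)\<^sub>2)\<close>; since \<open>(F)\<^sub>2 \<le> K (F)\<^sub>0 \<le> K (F)\<^sub>1 / 2\<close>,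
  the first bound wins for large cuts and the second for small ones. Combined with
  \<open>C(n,u) \<le> n\<^sup>u\<close> and \<open>C(n,u) \<le> (e n / u)\<^sup>u\<close> this bounds each term of the union bound over cuts by
  \<open>r\<^sub>1\<^sup>u + r\<^sub>2\<^sup>u\<close> with \<open>u = min s (n - s)\<close>, \<open>r\<^sub>1 = e\<^bsup>1/2 + \<mu>\<^esup>\<close> and \<open>r\<^sub>2 = e K L e\<^bsup>-2L/K\<^esup>\<close>, where
  \<open>L = m (F)\<^sub>1 / n \<rightarrow> \<infinity>\<close>. Summing two geometric series, the probability of being disconnected is at
  most \<open>4 r\<^sub>1 + 4 r\<^sub>2 \<rightarrow> 0\<close>.
\<close>

lemma binomial_Suc_mult_eq:
  "real (a choose Suc x) * (real x + 1) = real (a choose x) * (real a - real x)"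
proof (cases "x < a")
  case True
  have "Suc x * (a choose Suc x) = (a - x) * (a choose x)"
    by (simp only: binomial_absorption binomial_absorb_comp)
  then have "real (Suc x) * real (a choose Suc x) = real (a - x) * real (a choose x)"
    by (metis of_nat_mult)
  then show ?thesis using True by (simp add: of_nat_diff algebra_simps)
next
  case False
  then show ?thesis by (cases "x = a") (simp_all add: binomial_eq_0)
qed

lemma binomial_le_ratio_power_mult_binomial:
  assumes "a \<le> n" "0 < n"
  shows "real (a choose x) \<le> (real a / real n) ^ x * real (n choose x)"
proof (induction x)
  case (Suc x)
  have "real (a choose x) * (real a - real x)
        \<le> (real a / real n) ^ Suc x * (real (n choose x) * (real n - real x))"
  proof (cases "x < a")
    case True
    have "real a - real x \<le> real a / real n * (real n - real x)"
      using assms mult_right_mono[of a n "real x"] by (simp add: field_simps)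
    then have "real (a choose x) * (real a - real x)
          \<le> ((real a / real n) ^ x * real (n choose x)) * (real a / real n * (real n - real x))"
      using Suc.IH True by (intro mult_mono) auto
    then show ?thesis by (simp only: power_Suc mult_ac)
  next
    case False
    then have "real (a choose x) * (real a - real x) \<le> 0"
      by (intro mult_nonneg_nonpos) auto
    moreover have "0 \<le> real (n choose x) * (real n - real x)"
      by (cases "x \<le> n") (simp_all add: binomial_eq_0)
    ultimately show ?thesis by (simp add: order_trans)
  qed
  then have "real (a choose Suc x) * (real x + 1)
             \<le> (real a / real n) ^ Suc x * (real (n choose Suc x) * (real x + 1))"
    by (simp only: binomial_Suc_mult_eq)
  then show ?case
    by (simp only: mult.assoc[symmetric] mult_le_cancel_right_pos[of "real x + 1"])
qed simp

lemma power_div_fact_le_exp: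
  fixes x :: real
  assumes "0 \<le> x"
  shows "x ^ n / fact n \<le> exp x"
proof -
  have "(\<Sum>k\<in>{n}. x ^ k /\<^sub>R fact k) \<le> (\<Sum>k. x ^ k /\<^sub>R fact k)"
    using assms by (intro sum_le_suminf summable_exp_generic) auto
  then show ?thesis by (simp add: exp_def divide_inverse mult.commute)
qed

lemma binomial_le_exp_mult_div_power:
  assumes "1 \<le> u"
  shows "real (n choose u) \<le> (exp 1 * real n / real u) ^ u"
proof -
  have binom: "real (n choose u) * fact u \<le> real n ^ u"
    by (metis binomial_fact_pow of_nat_fact of_nat_le_iff of_nat_mult of_nat_power)
  have "real u ^ u / fact u \<le> exp 1 ^ u"
    using power_div_fact_le_exp[of "real u" u] by (simp add: exp_of_nat_mult[symmetric])
  then have pow: "real u ^ u \<le> exp 1 ^ u * fact u"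
    by (simp add: divide_le_eq)
  have "real (n choose u) * real u ^ u \<le> real (n choose u) * (exp 1 ^ u * fact u)"
    using pow by (rule mult_left_mono) simp
  also have "\<dots> = exp 1 ^ u * (real (n choose u) * fact u)"
    by (simp only: mult_ac)
  also have "\<dots> \<le> exp 1 ^ u * real n ^ u"
    using binom by (rule mult_left_mono) simp
  finally have "real (n choose u) * real u ^ u \<le> (exp 1 * real n) ^ u"
    by (simp only: power_mult_distrib)
  then show ?thesis
    using assms by (simp add: power_divide pos_le_divide_eq)
qed

lemma one_minus_power_le:
  fixes t :: real
  assumes "0 \<le> t" "t \<le> 1"
  shows "(1 - t) ^ x \<le> 1 - real x * t + (real x * t)\<^sup>2 / 2"
proof (induction x)
  case (Suc x)
  have "(1 - t) ^ Suc x \<le> (1 - t) * (1 - real x * t + (real x * t)\<^sup>2 / 2)"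
    using Suc.IH assms by (simp add: mult_left_mono)
  also have "\<dots> \<le> 1 - real (Suc x) * t + (real (Suc x) * t)\<^sup>2 / 2"
    using assms by (simp add: algebra_simps power2_eq_square mult_nonneg_nonneg)
  finally show ?case .
qed simp

lemma le_one_minus_powers:
  fixes t :: real
  assumes "0 \<le> t" "t \<le> 1/2" "2 \<le> x"
  shows "t \<le> 1 - t ^ x - (1 - t) ^ x"
proof -
  have "t ^ x \<le> t\<^sup>2" "(1 - t) ^ x \<le> (1 - t)\<^sup>2"
    using assms by (intro power_decreasing; simp)+
  moreover have "t * t \<le> t / 2" using assms mult_left_mono[of t "1/2" t] by simp
  ultimately show ?thesis by (simp add: power2_eq_square algebra_simps)
qed

lemma quadratic_le_one_minus_powers:
  fixes t :: real
  assumes "0 \<le> t" "t \<le> 1" "2 \<le> x"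
  shows "real x * t - (real x * t)\<^sup>2 \<le> 1 - t ^ x - (1 - t) ^ x"
proof -
  have "t ^ x \<le> t\<^sup>2" using assms by (intro power_decreasing) auto
  moreover have "4 * t\<^sup>2 \<le> (real x * t)\<^sup>2"
  proof -
    have "2\<^sup>2 \<le> (real x)\<^sup>2" using assms by (intro power_mono) auto
    then show ?thesis by (simp add: power_mult_distrib mult_right_mono)
  qed
  ultimately show ?thesis
    using one_minus_power_le[OF assms(1,2), of x] zero_le_power2[of "real x * t"] by linarith
qed

lemma sum_subsets_by_card:
  fixes h :: "nat \<Rightarrow> real"
  assumes "finite U" "Q \<subseteq> Pow U"
  shows "(\<Sum>A\<in>Q. h (card A)) = (\<Sum>x\<le>card U. real (card {A\<in>Q. card A = x}) * h x)"
proof -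
  have "finite Q" using assms finite_subset by auto
  moreover have "card ` Q \<subseteq> {..card U}" using assms by (auto intro: card_mono)
  ultimately have "(\<Sum>A\<in>Q. h (card A)) = (\<Sum>x\<le>card U. \<Sum>A | A \<in> Q \<and> card A = x. h (card A))"
    by (intro sum.group[symmetric]) auto
  also have "\<dots> = (\<Sum>x\<le>card U. real (card {A\<in>Q. card A = x}) * h x)"
    by (intro sum.cong refl) simp
  finally show ?thesis .
qed

lemma sum_Pow_div_binomial_card:
  fixes g :: "nat \<Rightarrow> real"
  assumes "finite U"
  shows "(\<Sum>A\<in>Pow U. g (card A) / real (card U choose card A)) = (\<Sum>x\<le>card U. g x)"
  using sum_subsets_by_card[OF assms order_refl, of "\<lambda>x. g x / real (card U choose x)"]
  by (simp add: Pow_def n_subsets[OF assms])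

lemma sum_proper_subsets_by_card:
  fixes h :: "nat \<Rightarrow> real"
  assumes "finite U"
  shows "(\<Sum>S | S \<subseteq> U \<and> S \<noteq> {} \<and> S \<noteq> U. h (card S))
         = (\<Sum>x\<in>{1..card U - 1}. real (card U choose x) * h x)"
proof -
  let ?C = "{S. S \<subseteq> U \<and> S \<noteq> {} \<and> S \<noteq> U}"
  have proper: "S \<noteq> {} \<and> S \<noteq> U \<longleftrightarrow> card S \<in> {1..card U - 1}" if "S \<subseteq> U" for S
  proof -
    have "S \<noteq> {} \<longleftrightarrow> 0 < card S"
      using finite_subset[OF that assms] by (simp add: card_gt_0_iff)
    moreover have "S \<noteq> U \<longleftrightarrow> card S < card U"
      by (metis psubsetI psubset_card_mono[OF assms] card_subset_eq[OF assms that] less_irrefl that)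
    ultimately show ?thesis by auto
  qed
  have count: "{S\<in>?C. card S = x} = (if x \<in> {1..card U - 1} then {S. S \<subseteq> U \<and> card S = x} else {})"
    for x
    using proper by auto
  have "(\<Sum>S\<in>?C. h (card S)) = (\<Sum>x\<le>card U. real (card {S\<in>?C. card S = x}) * h x)"
    by (rule sum_subsets_by_card[OF assms]) auto
  also have "\<dots> = (\<Sum>x\<le>card U. if x \<in> {1..card U - 1} then real (card U choose x) * h x else 0)"
    unfolding count by (intro sum.cong refl) (simp add: n_subsets[OF assms])
  also have "\<dots> = (\<Sum>x\<in>{1..card U - 1}. real (card U choose x) * h x)"
    by (simp add: sum.inter_filter[symmetric]) (intro sum.cong; auto)
  finally show ?thesis .
qed

definition non_crossing :: "'a set \<Rightarrow> 'a set \<Rightarrow> 'a set set" where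
  "non_crossing U S = {A. A \<subseteq> S \<or> A \<subseteq> U - S}"

text \<open>Probability that a uniformly random \<open>x\<close>-subset of an \<open>n\<close>-set meets both a fixed \<open>s\<close>-subset
  and its complement.\<close>
definition cut_prob :: "nat \<Rightarrow> nat \<Rightarrow> nat \<Rightarrow> real" where
  "cut_prob n s x = 1 - (real (s choose x) + real ((n - s) choose x)) / real (n choose x)"

lemma card_non_crossing_le:
  assumes "finite U" "S \<subseteq> U"
  shows "card {A\<in>non_crossing U S. card A = x}
         \<le> (card S choose x) + ((card U - card S) choose x)"
proof -
  have fin: "finite S" "finite (U - S)" using assms finite_subset by auto
  have "card {A\<in>non_crossing U S. card A = x}
        \<le> card ({A. A \<subseteq> S \<and> card A = x} \<union> {A. A \<subseteq> U - S \<and> card A = x})"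
    using fin by (intro card_mono) (auto simp: non_crossing_def)
  also have "\<dots> \<le> card {A. A \<subseteq> S \<and> card A = x} + card {A. A \<subseteq> U - S \<and> card A = x}"
    by (rule card_Un_le)
  finally show ?thesis
    using assms fin by (simp add: n_subsets card_Diff_subset)
qed

lemma card_non_crossing_le_binomial:
  assumes S: "S \<subseteq> {1..n}" and "x \<le> n"
  shows "real (card {A\<in>non_crossing {1..n} S. card A = x})
         \<le> (1 - (if 2 \<le> x then cut_prob n (card S) x else 0)) * real (n choose x)"
proof (cases "2 \<le> x")
  case True
  have "real (n choose x) > 0" using \<open>x \<le> n\<close> by simp
  then show ?thesis
    using True card_non_crossing_le[OF _ S, of x] by (simp add: cut_prob_def flip: of_nat_add)
next
  case False
  have "card {A\<in>non_crossing {1..n} S. card A = x} \<le> card {A. A \<subseteq> {1..n} \<and> card A = x}"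
    using S by (intro card_mono) (auto simp: non_crossing_def)
  with False show ?thesis by (simp add: n_subsets)
qed

lemma sum_non_crossing_le:
  fixes g :: "nat \<Rightarrow> real"
  assumes S: "S \<subseteq> {1..n}" and g: "\<And>x. 0 \<le> g x" "(\<Sum>x\<in>{0..n}. g x) = 1"
  shows "(\<Sum>A\<in>non_crossing {1..n} S. g (card A) / real (n choose card A))
         \<le> 1 - (\<Sum>x\<in>{2..n}. g x * cut_prob n (card S) x)"
proof -
  let ?N = "\<lambda>x. card {A\<in>non_crossing {1..n} S. card A = x}"
  let ?c = "\<lambda>x. if 2 \<le> x then cut_prob n (card S) x else 0"
  have "non_crossing {1..n} S \<subseteq> Pow {1..n}"
    using S by (auto simp: non_crossing_def)
  then have "(\<Sum>A\<in>non_crossing {1..n} S. g (card A) / real (n choose card A))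
             = (\<Sum>x\<le>n. real (?N x) * (g x / real (n choose x)))"
    using sum_subsets_by_card[of "{1..n}" _ "\<lambda>x. g x / real (n choose x)"] by simp
  also have "\<dots> \<le> (\<Sum>x\<le>n. (1 - ?c x) * real (n choose x) * (g x / real (n choose x)))"
    using S g(1) by (intro sum_mono mult_right_mono card_non_crossing_le_binomial) auto
  also have "\<dots> = (\<Sum>x\<le>n. g x - (if x \<in> {2..n} then g x * cut_prob n (card S) x else 0))"
    by (intro sum.cong refl) (auto simp: field_simps)
  also have "\<dots> = (\<Sum>x\<le>n. g x) - (\<Sum>x | x \<in> {..n} \<and> x \<in> {2..n}. g x * cut_prob n (card S) x)"
    by (simp only: sum_subtractf sum.inter_filter finite_atMost)
  also have "{x. x \<in> {..n} \<and> x \<in> {2..n}} = {2..n}" by auto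
  finally show ?thesis using g(2) by (simp add: atLeast0AtMost)
qed

lemma sum_PiE_prod_union_bound:
  fixes p :: "'i \<Rightarrow> 'a \<Rightarrow> real"
  assumes fin: "finite I" "finite X" "finite C"
    and p: "\<And>k A. k \<in> I \<Longrightarrow> 0 \<le> p k A"
    and N: "\<And>c. c \<in> C \<Longrightarrow> N c \<subseteq> X"
    and cover: "\<And>V. V \<in> PiE I (\<lambda>_. X) \<Longrightarrow> \<not> Q V \<Longrightarrow> \<exists>c\<in>C. V \<in> PiE I (\<lambda>_. N c)"
  shows "(\<Sum>V\<in>PiE I (\<lambda>_. X). if Q V then 0 else \<Prod>k\<in>I. p k (V k))
         \<le> (\<Sum>c\<in>C. \<Prod>k\<in>I. \<Sum>A\<in>N c. p k A)"
proof -
  define w where "w V = (\<Prod>k\<in>I. p k (V k))" for V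
  have w: "0 \<le> w V" for V unfolding w_def using p by (intro prod_nonneg) auto
  have "(\<Sum>V\<in>PiE I (\<lambda>_. X). if Q V then 0 else w V)
        \<le> (\<Sum>V\<in>PiE I (\<lambda>_. X). \<Sum>c\<in>C. if V \<in> PiE I (\<lambda>_. N c) then w V else 0)"
  proof (rule sum_mono)
    fix V assume V: "V \<in> PiE I (\<lambda>_. X)"
    show "(if Q V then 0 else w V) \<le> (\<Sum>c\<in>C. if V \<in> PiE I (\<lambda>_. N c) then w V else 0)"
    proof (cases "Q V")
      case False
      then obtain c where "c \<in> C" "V \<in> PiE I (\<lambda>_. N c)" using cover V by blast
      then have "w V \<le> (\<Sum>c\<in>C. if V \<in> PiE I (\<lambda>_. N c) then w V else 0)"
        using member_le_sum[of c C "\<lambda>c. if V \<in> PiE I (\<lambda>_. N c) then w V else 0"] fin w by simp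
      with False show ?thesis by simp
    qed (simp add: w sum_nonneg)
  qed
  also have "\<dots> = (\<Sum>c\<in>C. \<Sum>V\<in>PiE I (\<lambda>_. X). if V \<in> PiE I (\<lambda>_. N c) then w V else 0)"
    by (rule sum.swap)
  also have "\<dots> = (\<Sum>c\<in>C. \<Sum>V\<in>PiE I (\<lambda>_. X) \<inter> PiE I (\<lambda>_. N c). w V)"
    using fin by (intro sum.cong refl sum.inter_restrict[symmetric]) (simp add: finite_PiE)
  also have "\<dots> = (\<Sum>c\<in>C. \<Sum>V\<in>PiE I (\<lambda>_. N c). w V)"
    using N by (intro sum.cong refl) (auto dest: PiE_mem)
  also have "\<dots> = (\<Sum>c\<in>C. \<Prod>k\<in>I. \<Sum>A\<in>N c. p k A)"
    unfolding w_def using fin N by (intro sum.cong refl prod_sum_PiE[symmetric]) (auto intro: finite_subset)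
  finally show ?thesis unfolding w_def .
qed

lemma not_hg_connected_imp_non_crossing:
  assumes "\<not> hg_connected n M V" "\<And>k. k \<in> {1..M} \<Longrightarrow> V k \<subseteq> {1..n}"
  shows "\<exists>S. S \<subseteq> {1..n} \<and> S \<noteq> {} \<and> S \<noteq> {1..n} \<and> (\<forall>k\<in>{1..M}. V k \<in> non_crossing {1..n} S)"
proof -
  obtain S T where ST: "S \<noteq> {} \<and> T \<noteq> {} \<and> S \<inter> T = {} \<and> S \<union> T = {1..n}"
    and no_edge: "\<not> (\<exists>k\<in>{1..M}. V k \<inter> S \<noteq> {} \<and> V k \<inter> T \<noteq> {})"
    using assms(1) unfolding hg_connected_def by blast
  have "\<forall>k\<in>{1..M}. V k \<in> non_crossing {1..n} S"
  proof
    fix k assume k: "k \<in> {1..M}"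
    have "V k \<inter> S = {} \<or> V k \<inter> T = {}" using no_edge k by blast
    moreover have "V k \<subseteq> S \<union> T" using assms(2)[OF k] ST by simp
    moreover have "T = {1..n} - S" using ST by blast
    ultimately show "V k \<in> non_crossing {1..n} S" unfolding non_crossing_def by blast
  qed
  moreover have "S \<subseteq> {1..n}" "S \<noteq> {}" "S \<noteq> {1..n}" using ST by auto
  ultimately show ?thesis by blast
qed

lemma sum_Pow_edge_prob:
  assumes "is_dist_family n M g" "k \<in> {1..M}"
  shows "(\<Sum>A\<in>Pow {1..n}. edge_prob n g k A) = 1"
  using assms sum_Pow_div_binomial_card[of "{1..n}" "g k"]
  by (simp add: is_dist_family_def edge_prob_def atLeast0AtMost)

lemma one_minus_prob_connected_eq:
  assumes "is_dist_family n M g"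
  shows "1 - prob_connected n M g
         = (\<Sum>V\<in>PiE {1..M} (\<lambda>_. Pow {1..n}).
              if hg_connected n M V then 0 else \<Prod>k\<in>{1..M}. edge_prob n g k (V k))"
    (is "_ = ?R")
proof -
  have "(\<Sum>V\<in>PiE {1..M} (\<lambda>_. Pow {1..n}). \<Prod>k\<in>{1..M}. edge_prob n g k (V k)) = 1"
    using prod_sum_PiE[of "{1..M}" "\<lambda>_. Pow {1..n}" "edge_prob n g"] sum_Pow_edge_prob[OF assms]
    by simp
  then have "1 - prob_connected n M g
      = (\<Sum>V\<in>PiE {1..M} (\<lambda>_. Pow {1..n}). \<Prod>k\<in>{1..M}. edge_prob n g k (V k))
        - (\<Sum>V\<in>PiE {1..M} (\<lambda>_. Pow {1..n}).
             if hg_connected n M V then \<Prod>k\<in>{1..M}. edge_prob n g k (V k) else 0)"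
    unfolding prob_connected_def edge_prob_def by simp
  also have "\<dots> = ?R"
    by (subst sum_subtractf[symmetric]) (intro sum.cong refl; simp)
  finally show ?thesis .
qed

lemma prob_connected_le_1:
  assumes "is_dist_family n M g"
  shows "prob_connected n M g \<le> 1"
proof -
  have "0 \<le> edge_prob n g k A" if "k \<in> {1..M}" for k A
    using assms that by (simp add: is_dist_family_def edge_prob_def)
  then have "0 \<le> 1 - prob_connected n M g"
    unfolding one_minus_prob_connected_eq[OF assms] by (intro sum_nonneg) (auto intro!: prod_nonneg)
  then show ?thesis by simp
qed

text \<open>Expected number of hyperedges crossing a fixed cut with \<open>s\<close> nodes on one side (hyperedges of
  size 0 or 1 never cross).\<close>
definition expected_crossing :: "nat \<Rightarrow> nat \<Rightarrow> (nat \<Rightarrow> nat \<Rightarrow> real) \<Rightarrow> nat \<Rightarrow> real" where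
  "expected_crossing n M g s = (\<Sum>k\<in>{1..M}. \<Sum>x\<in>{2..n}. g k x * cut_prob n s x)"

lemma prod_sum_non_crossing_le_exp:
  assumes dist: "is_dist_family n M g" and S: "S \<subseteq> {1..n}"
  shows "(\<Prod>k\<in>{1..M}. \<Sum>A\<in>non_crossing {1..n} S. edge_prob n g k A)
         \<le> exp (- expected_crossing n M g (card S))"
proof -
  let ?c = "\<lambda>k. \<Sum>x\<in>{2..n}. g k x * cut_prob n (card S) x"
  have "(\<Prod>k\<in>{1..M}. \<Sum>A\<in>non_crossing {1..n} S. edge_prob n g k A) \<le> (\<Prod>k\<in>{1..M}. exp (- ?c k))"
  proof (rule prod_mono)
    fix k assume k: "k \<in> {1..M}"
    then have g: "\<And>x. 0 \<le> g k x" "(\<Sum>x\<in>{0..n}. g k x) = 1"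
      using dist by (auto simp: is_dist_family_def)
    have "(\<Sum>A\<in>non_crossing {1..n} S. edge_prob n g k A) \<le> 1 - ?c k"
      unfolding edge_prob_def using S g by (rule sum_non_crossing_le)
    also have "\<dots> \<le> exp (- ?c k)"
      using exp_ge_add_one_self[of "- ?c k"] by simp
    finally show "0 \<le> (\<Sum>A\<in>non_crossing {1..n} S. edge_prob n g k A) \<and>
                  (\<Sum>A\<in>non_crossing {1..n} S. edge_prob n g k A) \<le> exp (- ?c k)"
      using g(1) by (auto simp: edge_prob_def intro: sum_nonneg)
  qed
  also have "\<dots> = exp (- expected_crossing n M g (card S))"
    by (simp add: expected_crossing_def exp_sum flip: sum_negf)
  finally show ?thesis .
qed

lemma one_minus_prob_connected_le:
  assumes dist: "is_dist_family n M g"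
  shows "1 - prob_connected n M g
         \<le> (\<Sum>s\<in>{1..n-1}. real (n choose s) * exp (- expected_crossing n M g s))"
proof -
  let ?U = "{1..n}"
  let ?C = "{S. S \<subseteq> ?U \<and> S \<noteq> {} \<and> S \<noteq> ?U}"
  have "1 - prob_connected n M g \<le> (\<Sum>S\<in>?C. \<Prod>k\<in>{1..M}. \<Sum>A\<in>non_crossing ?U S. edge_prob n g k A)"
    unfolding one_minus_prob_connected_eq[OF dist]
  proof (rule sum_PiE_prod_union_bound)
    show "0 \<le> edge_prob n g k A" if "k \<in> {1..M}" for k A
      using dist that by (simp add: is_dist_family_def edge_prob_def)
    show "non_crossing ?U S \<subseteq> Pow ?U" if "S \<in> ?C" for S
      using that by (auto simp: non_crossing_def)
    show "\<exists>S\<in>?C. V \<in> PiE {1..M} (\<lambda>_. non_crossing ?U S)"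
      if V: "V \<in> PiE {1..M} (\<lambda>_. Pow ?U)" and disconnected: "\<not> hg_connected n M V" for V
    proof -
      have "V k \<subseteq> ?U" if "k \<in> {1..M}" for k
        using PiE_mem[OF V that] by simp
      then obtain S where S: "S \<in> ?C" and nc: "\<forall>k\<in>{1..M}. V k \<in> non_crossing ?U S"
        using not_hg_connected_imp_non_crossing[OF disconnected] by blast
      have "V \<in> PiE {1..M} (\<lambda>_. non_crossing ?U S)"
        using V nc by (simp add: PiE_iff)
      with S show ?thesis by blast
    qed
  qed auto
  also have "\<dots> \<le> (\<Sum>S\<in>?C. exp (- expected_crossing n M g (card S)))"
    using dist by (intro sum_mono prod_sum_non_crossing_le_exp) auto
  also have "\<dots> = (\<Sum>s\<in>{1..n-1}. real (n choose s) * exp (- expected_crossing n M g s))"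
    using sum_proper_subsets_by_card[of ?U] by simp
  finally show ?thesis .
qed

definition cut_fraction :: "nat \<Rightarrow> nat \<Rightarrow> real" where
  "cut_fraction n s = real (min s (n - s)) / real n"

lemma cut_fraction_bounds: "0 \<le> cut_fraction n s" "cut_fraction n s \<le> 1/2"
proof -
  have "2 * min s (n - s) \<le> n" by (simp add: min_def) linarith
  then have "2 * real (min s (n - s)) \<le> real n"
    by (metis of_nat_le_iff of_nat_mult of_nat_numeral)
  then show "0 \<le> cut_fraction n s" "cut_fraction n s \<le> 1/2"
    by (auto simp: cut_fraction_def divide_le_eq)
qed

lemma cut_prob_ge:
  assumes "s \<le> n" "x \<le> n"
  shows "1 - cut_fraction n s ^ x - (1 - cut_fraction n s) ^ x \<le> cut_prob n s x"
proof (cases "n = 0")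
  case False
  have pos: "real (n choose x) > 0" using assms by simp
  have "(real (s choose x) + real ((n - s) choose x)) / real (n choose x)
        \<le> ((real s / real n) ^ x * real (n choose x)
            + (real (n - s) / real n) ^ x * real (n choose x)) / real (n choose x)"
    using binomial_le_ratio_power_mult_binomial[of s n x]
      binomial_le_ratio_power_mult_binomial[of "n - s" n x] assms False
    by (intro divide_right_mono add_mono) auto
  also have "\<dots> = (real s / real n) ^ x + (real (n - s) / real n) ^ x"
    using pos by (simp add: field_simps)
  also have "\<dots> = cut_fraction n s ^ x + (1 - cut_fraction n s) ^ x"
    using assms False
    by (cases "s \<le> n - s") (simp_all add: cut_fraction_def min_def of_nat_diff field_simps)
  finally show ?thesis unfolding cut_prob_def by simp
qed (use assms in \<open>simp add: cut_fraction_def cut_prob_def\<close>)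

lemma moment_nonneg:
  assumes "\<And>k x. k \<in> {1..M} \<Longrightarrow> 0 \<le> g k x"
  shows "0 \<le> moment r n M g"
  unfolding moment_def using assms by (intro mult_nonneg_nonneg sum_nonneg) auto

lemma of_nat_mult_moment:
  "real M * moment r n M g = (\<Sum>k\<in>{1..M}. \<Sum>x\<in>{2..n}. real x ^ r * g k x)"
  by (cases "M = 0") (simp_all add: moment_def)

lemma moment_Suc_ge:
  assumes "\<And>k x. k \<in> {1..M} \<Longrightarrow> 0 \<le> g k x"
  shows "2 * moment r n M g \<le> moment (Suc r) n M g"
proof -
  have "2 * real x ^ r * g k x \<le> real x ^ Suc r * g k x" if "k \<in> {1..M}" "x \<in> {2..n}" for k x
    using that assms[OF that(1)] by (intro mult_right_mono) auto
  then have "2 * (\<Sum>k\<in>{1..M}. \<Sum>x\<in>{2..n}. real x ^ r * g k x)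
             \<le> (\<Sum>k\<in>{1..M}. \<Sum>x\<in>{2..n}. real x ^ Suc r * g k x)"
    unfolding sum_distrib_left mult.assoc[symmetric] by (intro sum_mono) auto
  then have "1 / real M * (2 * (\<Sum>k\<in>{1..M}. \<Sum>x\<in>{2..n}. real x ^ r * g k x))
             \<le> 1 / real M * (\<Sum>k\<in>{1..M}. \<Sum>x\<in>{2..n}. real x ^ Suc r * g k x)"
    by (rule mult_left_mono) simp
  then show ?thesis
    unfolding moment_def by (simp only: mult.left_commute[of 2])
qed

lemma moment_le_power_mult_moment0:
  assumes "\<And>k x. k \<in> {1..M} \<Longrightarrow> 0 \<le> g k x"
  shows "moment r n M g \<le> real n ^ r * moment 0 n M g"
proof -
  have "real x ^ r * g k x \<le> real n ^ r * g k x" if "k \<in> {1..M}" "x \<in> {2..n}" for k x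
    using that assms[OF that(1)] by (intro mult_right_mono power_mono) auto
  then have "(\<Sum>k\<in>{1..M}. \<Sum>x\<in>{2..n}. real x ^ r * g k x)
             \<le> real n ^ r * (\<Sum>k\<in>{1..M}. \<Sum>x\<in>{2..n}. g k x)"
    unfolding sum_distrib_left by (intro sum_mono) auto
  then have "1 / real M * (\<Sum>k\<in>{1..M}. \<Sum>x\<in>{2..n}. real x ^ r * g k x)
             \<le> 1 / real M * (real n ^ r * (\<Sum>k\<in>{1..M}. \<Sum>x\<in>{2..n}. g k x))"
    by (rule mult_left_mono) simp
  then show ?thesis
    unfolding moment_def by (simp only: mult.left_commute[of "real n ^ r"] power_0 mult_1)
qed

lemma expected_crossing_ge:
  assumes "\<And>k x. k \<in> {1..M} \<Longrightarrow> 0 \<le> g k x" "\<And>x. x \<in> {2..n} \<Longrightarrow> \<phi> x \<le> cut_prob n s x"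
  shows "(\<Sum>k\<in>{1..M}. \<Sum>x\<in>{2..n}. g k x * \<phi> x) \<le> expected_crossing n M g s"
  unfolding expected_crossing_def using assms by (intro sum_mono mult_left_mono) auto

lemma expected_crossing_ge_moment0:
  assumes g: "\<And>k x. k \<in> {1..M} \<Longrightarrow> 0 \<le> g k x" and "s \<le> n"
  shows "real M * (cut_fraction n s * moment 0 n M g) \<le> expected_crossing n M g s"
proof -
  let ?t = "cut_fraction n s"
  have "(\<Sum>k\<in>{1..M}. \<Sum>x\<in>{2..n}. g k x * ?t) \<le> expected_crossing n M g s"
  proof (rule expected_crossing_ge[OF g])
    fix x assume "x \<in> {2..n}"
    then show "?t \<le> cut_prob n s x"
      using cut_prob_ge[OF \<open>s \<le> n\<close>, of x] cut_fraction_bounds[of n s]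
        le_one_minus_powers[of ?t x]
      by simp
  qed
  moreover have "real M * (?t * moment 0 n M g) = (\<Sum>k\<in>{1..M}. \<Sum>x\<in>{2..n}. g k x * ?t)"
    by (simp add: mult.left_commute[of "real M"] of_nat_mult_moment sum_distrib_left mult_ac)
  ultimately show ?thesis by simp
qed

lemma expected_crossing_ge_moments12:
  assumes g: "\<And>k x. k \<in> {1..M} \<Longrightarrow> 0 \<le> g k x" and "s \<le> n"
  shows "real M * (cut_fraction n s * moment 1 n M g - (cut_fraction n s)\<^sup>2 * moment 2 n M g)
         \<le> expected_crossing n M g s"
proof -
  let ?t = "cut_fraction n s"
  have "(\<Sum>k\<in>{1..M}. \<Sum>x\<in>{2..n}. g k x * (real x * ?t - (real x * ?t)\<^sup>2))
        \<le> expected_crossing n M g s"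
  proof (rule expected_crossing_ge[OF g])
    fix x assume "x \<in> {2..n}"
    then show "real x * ?t - (real x * ?t)\<^sup>2 \<le> cut_prob n s x"
      using cut_prob_ge[OF \<open>s \<le> n\<close>, of x] cut_fraction_bounds[of n s]
        quadratic_le_one_minus_powers[of ?t x]
      by simp
  qed
  moreover have "real M * (?t * moment 1 n M g - ?t\<^sup>2 * moment 2 n M g)
      = ?t * (real M * moment 1 n M g) - ?t\<^sup>2 * (real M * moment 2 n M g)"
    by (simp add: algebra_simps)
  moreover have "\<dots> = (\<Sum>k\<in>{1..M}. \<Sum>x\<in>{2..n}. g k x * (real x * ?t - (real x * ?t)\<^sup>2))"
    unfolding of_nat_mult_moment
    by (simp add: sum_distrib_left sum_subtractf algebra_simps power_mult_distrib)
  ultimately show ?thesis by simp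
qed

lemma expected_crossing_lower_bounds:
  assumes g: "\<And>k x. k \<in> {1..M} \<Longrightarrow> 0 \<le> g k x"
    and "1 \<le> n" "s \<le> n" "0 < K"
    and K: "moment 2 n M g \<le> K * moment 0 n M g"
    and L: "L = real M / real n * moment 1 n M g"
  defines "u \<equiv> min s (n - s)"
  shows "2 * real u * L / K \<le> expected_crossing n M g s"
    and "real u * L - (real u)\<^sup>2 * K * L / (2 * real n) \<le> expected_crossing n M g s"
proof -
  define t where "t = cut_fraction n s"
  define m where "m r = real M * moment r n M g" for r
  have t: "0 \<le> t" using cut_fraction_bounds by (simp add: t_def)
  have "2 * moment 0 n M g \<le> moment 1 n M g" "2 * moment 1 n M g \<le> moment 2 n M g"
    using moment_Suc_ge[of M g 0 n, OF g] moment_Suc_ge[of M g 1 n, OF g]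
    by (simp_all add: numeral_2_eq_2)
  then have m01: "2 * m 0 \<le> m 1" and m12: "2 * m 1 \<le> m 2"
    unfolding m_def by (simp_all add: mult_left_mono mult.left_commute)
  have m2: "m 2 \<le> K * m 0"
    using mult_left_mono[OF K, of "real M"] by (simp add: m_def mult.left_commute)
  have uL: "real u * L = t * m 1"
    using \<open>1 \<le> n\<close> by (simp add: L t_def m_def u_def cut_fraction_def)
  have "2 * real u * L / K = t * (2 * m 1 / K)" using uL by simp
  also have "\<dots> \<le> t * m 0"
    using m12 m2 \<open>0 < K\<close> t by (intro mult_left_mono) (simp_all add: field_simps)
  also have "\<dots> \<le> expected_crossing n M g s"
    using expected_crossing_ge_moment0[of M g, OF g \<open>s \<le> n\<close>] by (simp add: t_def m_def mult_ac)
  finally show "2 * real u * L / K \<le> expected_crossing n M g s" .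
  have "K * (2 * m 0) \<le> K * m 1" using m01 \<open>0 < K\<close> by (intro mult_left_mono) auto
  then have "t\<^sup>2 * m 2 \<le> t\<^sup>2 * (K * m 1 / 2)" using m2 by (intro mult_left_mono) auto
  moreover have "(real u)\<^sup>2 * K * L / (2 * real n) = t\<^sup>2 * (K * m 1 / 2)"
    using \<open>1 \<le> n\<close> uL by (simp add: t_def cut_fraction_def u_def power2_eq_square field_simps)
  moreover have "t * m 1 - t\<^sup>2 * m 2 \<le> expected_crossing n M g s"
    using expected_crossing_ge_moments12[of M g, OF g \<open>s \<le> n\<close>] by (simp add: t_def m_def algebra_simps)
  ultimately show "real u * L - (real u)\<^sup>2 * K * L / (2 * real n) \<le> expected_crossing n M g s"
    using uL by linarith
qed

lemma binomial_mult_exp_neg_le: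
  assumes u: "1 \<le> u" "u \<le> n" and "0 < K" "0 < L"
    and A1: "2 * real u * L / K \<le> A"
    and A2: "real u * L - (real u)\<^sup>2 * K * L / (2 * real n) \<le> A"
  shows "real (n choose u) * exp (- A)
         \<le> (real n * exp (1/2 - L)) ^ u + (exp 1 * K * L * exp (- (2 * L / K))) ^ u"
proof (cases "real u * K * L \<le> real n")
  case True
  have "(real u)\<^sup>2 * K * L / (2 * real n) \<le> real u / 2"
    using True u by (simp add: power2_eq_square divide_le_eq mult.assoc mult_left_mono)
  with A2 have "exp (- A) \<le> exp (real u * (1/2 - L))"
    by (simp add: algebra_simps)
  moreover have "real (n choose u) \<le> real n ^ u"
    by (metis binomial_le_pow[OF u(2)] of_nat_le_iff of_nat_power)
  ultimately have "real (n choose u) * exp (- A) \<le> real n ^ u * exp (real u * (1/2 - L))"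
    by (intro mult_mono) auto
  also have "\<dots> = (real n * exp (1/2 - L)) ^ u"
    by (simp add: exp_of_nat_mult power_mult_distrib)
  finally show ?thesis
    using \<open>0 < K\<close> \<open>0 < L\<close> by (simp add: add_increasing2)
next
  case False
  then have "real n / real u \<le> K * L"
    using u by (simp add: divide_le_eq mult_ac)
  then have "exp 1 * real n / real u \<le> exp 1 * K * L"
    using mult_left_mono[of "real n / real u" "K * L" "exp 1"] by (simp add: mult.assoc)
  then have "real (n choose u) \<le> (exp 1 * K * L) ^ u"
    using binomial_le_exp_mult_div_power[OF u(1), of n] power_mono by (fastforce intro: order_trans)
  moreover have "exp (- A) \<le> exp (real u * (- (2 * L / K)))"
    using A1 by (simp add: mult_ac)
  ultimately have "real (n choose u) * exp (- A) \<le> (exp 1 * K * L) ^ u * exp (real u * (- (2 * L / K)))"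
    by (intro mult_mono) auto
  also have "\<dots> = (exp 1 * K * L * exp (- (2 * L / K))) ^ u"
    by (simp only: exp_of_nat_mult power_mult_distrib)
  finally show ?thesis
    by (simp add: add_increasing)
qed

lemma binomial_mult_exp_neg_crossing_le:
  assumes g: "\<And>k x. k \<in> {1..M} \<Longrightarrow> 0 \<le> g k x"
    and s: "1 \<le> s" "s < n" and "0 < K" "0 < L"
    and K: "moment 2 n M g \<le> K * moment 0 n M g"
    and L: "L = real M / real n * moment 1 n M g"
  shows "real (n choose s) * exp (- expected_crossing n M g s)
         \<le> (real n * exp (1/2 - L)) ^ min s (n - s)
           + (exp 1 * K * L * exp (- (2 * L / K))) ^ min s (n - s)"
proof -
  have "n choose s = n choose min s (n - s)"
    using binomial_symmetric[of s n] s by (simp add: min_def)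
  moreover have "1 \<le> min s (n - s)" "min s (n - s) \<le> n" using s by auto
  ultimately show ?thesis
    using binomial_mult_exp_neg_le \<open>0 < K\<close> \<open>0 < L\<close>
      expected_crossing_lower_bounds[OF g _ _ \<open>0 < K\<close> K L, of s] s
    by simp
qed

lemma sum_power_le_two_mult:
  fixes r :: real
  assumes "0 \<le> r" "r \<le> 1/2"
  shows "(\<Sum>s\<in>{1..N}. r ^ s) \<le> 2 * r"
proof -
  have "(\<Sum>s\<in>{1..N}. r ^ s) \<le> 2 * r - 2 * r ^ Suc N"
  proof (induction N)
    case (Suc N)
    have "2 * r ^ Suc (Suc N) \<le> r ^ Suc N"
      using assms mult_left_mono[of "2 * r" 1 "r ^ Suc N"] by (simp add: mult_ac)
    with Suc show ?case by simp
  qed simp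
  moreover have "0 \<le> r ^ Suc N" using assms by simp
  ultimately show ?thesis by linarith
qed

lemma sum_power_min_le:
  fixes r :: real
  assumes "0 \<le> r" "r \<le> 1/2"
  shows "(\<Sum>s\<in>{1..n-1}. r ^ min s (n - s)) \<le> 4 * r"
proof -
  have "(\<Sum>s\<in>{1..n-1}. r ^ min s (n - s)) \<le> (\<Sum>s\<in>{1..n-1}. r ^ s) + (\<Sum>s\<in>{1..n-1}. r ^ (n - s))"
    using assms by (simp add: min_def sum.distrib[symmetric] sum_mono)
  also have "(\<Sum>s\<in>{1..n-1}. r ^ (n - s)) = (\<Sum>s\<in>{1..n-1}. r ^ s)"
    by (rule sum.reindex_bij_witness[of _ "\<lambda>s. n - s" "\<lambda>s. n - s"]) auto
  finally show ?thesis using sum_power_le_two_mult[OF assms, of "n - 1"] by simp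
qed

lemma prob_connected_ge:
  assumes n: "2 \<le> n" and dist: "is_dist_family n M g" and "0 < K"
    and K: "moment 2 n M g \<le> K * moment 0 n M g"
    and L: "L = real M / real n * moment 1 n M g"
  defines "r1 \<equiv> real n * exp (1/2 - L)" and "r2 \<equiv> exp 1 * K * L * exp (- (2 * L / K))"
  assumes r: "r1 \<le> 1/2" "r2 \<le> 1/2"
  shows "1 - 4 * r1 - 4 * r2 \<le> prob_connected n M g"
proof -
  have g: "\<And>k x. k \<in> {1..M} \<Longrightarrow> 0 \<le> g k x" using dist by (simp add: is_dist_family_def)
  have "2 * exp (1/2 - L) \<le> r1"
    unfolding r1_def using n by (intro mult_right_mono) auto
  then have "exp (1/2 - L) < 1" using r(1) by linarith
  then have "0 < L" by simp
  then have r0: "0 \<le> r1" "0 \<le> r2" using \<open>0 < K\<close> by (simp_all add: r1_def r2_def)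
  have "1 - prob_connected n M g
        \<le> (\<Sum>s\<in>{1..n-1}. real (n choose s) * exp (- expected_crossing n M g s))"
    by (rule one_minus_prob_connected_le[OF dist])
  also have "\<dots> \<le> (\<Sum>s\<in>{1..n-1}. r1 ^ min s (n - s) + r2 ^ min s (n - s))"
    unfolding r1_def r2_def using \<open>0 < L\<close>
    by (intro sum_mono binomial_mult_exp_neg_crossing_le[OF g _ _ \<open>0 < K\<close> _ K L]) auto
  also have "\<dots> \<le> 4 * r1 + 4 * r2"
    using sum_power_min_le[OF r0(1) r(1), of n] sum_power_min_le[OF r0(2) r(2), of n]
    by (simp add: sum.distrib)
  finally show ?thesis by simp
qed

text \<open>The quotient in \<^const>\<open>lesssim\<close> is \<open>0\<close> wherever \<open>b n = 0\<close>, so it says nothing there; hence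
  the second hypothesis.\<close>
lemma lesssim_imp_eventually_le_mult:
  assumes "lesssim a b"
    and "eventually (\<lambda>n. 0 \<le> b n \<and> (b n = 0 \<longrightarrow> a n \<le> 0)) sequentially"
  shows "\<exists>K>0. eventually (\<lambda>n. a n \<le> K * b n) sequentially"
proof -
  have "limsup (\<lambda>n. ereal (a n / \<bar>b n\<bar>)) \<noteq> \<infinity>"
    using assms(1) unfolding lesssim_def by simp
  then obtain N :: nat where "limsup (\<lambda>n. ereal (a n / \<bar>b n\<bar>)) < ereal (real N)"
    by (metis less_PInf_Ex_of_nat)
  then have "eventually (\<lambda>n. ereal (a n / \<bar>b n\<bar>) < ereal (real N)) sequentially"
    by (rule Limsup_lessD)
  with assms(2) have "eventually (\<lambda>n. a n \<le> (real N + 1) * b n) sequentially"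
  proof eventually_elim
    case (elim n)
    show ?case
    proof (cases "b n = 0")
      case False
      with elim have "a n < real N * b n" by (simp add: divide_less_eq)
      also have "\<dots> \<le> (real N + 1) * b n" using elim by (intro mult_right_mono) auto
      finally show ?thesis by simp
    qed (use elim in simp)
  qed
  then show ?thesis by (intro exI[of _ "real N + 1"]) simp
qed

lemma mult_exp_neg_tendsto_0:
  fixes L :: "'a \<Rightarrow> real"
  assumes "filterlim L at_top F" "0 < c"
  shows "((\<lambda>x. L x * exp (- (c * L x))) \<longlongrightarrow> 0) F"
proof -
  have "filterlim (\<lambda>x. c * L x) at_top F"
    by (rule filterlim_tendsto_pos_mult_at_top[OF tendsto_const]) (use assms in auto)
  from filterlim_compose[OF tendsto_power_div_exp_0[of 1] this]
  have "((\<lambda>x. (c * L x) / exp (c * L x)) \<longlongrightarrow> 0) F" by simp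
  then have "((\<lambda>x. (c * L x) / exp (c * L x) / c) \<longlongrightarrow> 0) F"
    using tendsto_divide_zero by blast
  moreover have "c * L x / exp (c * L x) / c = L x * exp (- (c * L x))" for x
    using \<open>0 < c\<close> by (simp add: exp_minus divide_inverse)
  ultimately show ?thesis by simp
qed

lemma mult_exp_tendsto_0_of_ln_diff:
  assumes "filterlim (\<lambda>n. ln (real n) - L n) at_bot sequentially"
  shows "(\<lambda>n. real n * exp (c - L n)) \<longlonglongrightarrow> 0"
proof -
  have "filterlim (\<lambda>n. c + (ln (real n) - L n)) at_bot sequentially"
    by (subst filterlim_tendsto_add_at_bot_iff[OF tendsto_const]) (rule assms)
  from filterlim_compose[OF exp_at_bot this]
  have "(\<lambda>n. exp (c + (ln (real n) - L n))) \<longlonglongrightarrow> 0" by simp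
  moreover have "eventually (\<lambda>n. exp (c + (ln (real n) - L n)) = real n * exp (c - L n)) sequentially"
    using eventually_gt_at_top[of 0]
  proof eventually_elim
    case (elim n)
    have "exp (c + (ln (real n) - L n)) = exp (ln (real n) + (c - L n))"
      by (simp add: algebra_simps)
    also have "\<dots> = real n * exp (c - L n)"
      using elim by (simp add: exp_add)
    finally show ?case .
  qed
  ultimately show ?thesis by (rule Lim_transform_eventually)
qed

lemma filterlim_at_top_of_ln_diff:
  assumes "filterlim (\<lambda>n. ln (real n) - L n) at_bot sequentially"
  shows "filterlim L at_top sequentially"
proof (rule filterlim_at_top_mono)
  show "filterlim (\<lambda>n. - (ln (real n) - L n)) at_top sequentially"
    using assms by (simp add: filterlim_uminus_at_top)
  show "eventually (\<lambda>n. - (ln (real n) - L n) \<le> L n) sequentially"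
    using eventually_gt_at_top[of 0] by eventually_elim simp
qed

lemma prob_connected_error_terms_tendsto_0:
  assumes "filterlim (\<lambda>n. ln (real n) - L n) at_bot sequentially" "0 < K"
  shows "(\<lambda>n. real n * exp (1/2 - L n)) \<longlonglongrightarrow> 0"
    and "(\<lambda>n. exp 1 * K * L n * exp (- (2 * L n / K))) \<longlonglongrightarrow> 0"
proof -
  show "(\<lambda>n. real n * exp (1/2 - L n)) \<longlonglongrightarrow> 0"
    by (rule mult_exp_tendsto_0_of_ln_diff[OF assms(1)])
  have "(\<lambda>n. L n * exp (- (2 / K * L n))) \<longlonglongrightarrow> 0"
    using assms by (intro mult_exp_neg_tendsto_0 filterlim_at_top_of_ln_diff) simp_all
  then show "(\<lambda>n. exp 1 * K * L n * exp (- (2 * L n / K))) \<longlonglongrightarrow> 0"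
    using tendsto_mult_right_zero[of _ sequentially "exp 1 * K"] by (simp add: mult.assoc)
qed

lemma moment2_le_mult_moment0_of_lesssim:
  assumes dist: "\<And>n. n \<ge> 1 \<Longrightarrow> is_dist_family n (m n) (f n)"
    and "lesssim (\<lambda>n. moment 2 n (m n) (f n)) (\<lambda>n. moment 0 n (m n) (f n))"
  shows "\<exists>K>0. eventually (\<lambda>n. moment 2 n (m n) (f n) \<le> K * moment 0 n (m n) (f n)) sequentially"
proof (rule lesssim_imp_eventually_le_mult[OF assms(2)])
  show "eventually (\<lambda>n. 0 \<le> moment 0 n (m n) (f n) \<and>
          (moment 0 n (m n) (f n) = 0 \<longrightarrow> moment 2 n (m n) (f n) \<le> 0)) sequentially"
    using eventually_ge_at_top[of 1]
  proof eventually_elim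
    case (elim n)
    then have g: "\<And>k x. k \<in> {1..m n} \<Longrightarrow> 0 \<le> f n k x"
      using dist by (simp add: is_dist_family_def)
    have "0 \<le> moment 0 n (m n) (f n)"
      using g by (rule moment_nonneg)
    moreover have "moment 2 n (m n) (f n) \<le> real n ^ 2 * moment 0 n (m n) (f n)"
      using g by (rule moment_le_power_mult_moment0)
    ultimately show ?case by (metis mult_zero_right)
  qed
qed

theorem mainTheorem14:
  fixes m :: "nat \<Rightarrow> nat"
    and f :: "nat \<Rightarrow> nat \<Rightarrow> nat \<Rightarrow> real"
  assumes m_pos: "\<And>n. n \<ge> 1 \<Longrightarrow> m n \<ge> 1"
    and dist: "\<And>n. n \<ge> 1 \<Longrightarrow> is_dist_family n (m n) (f n)"
    and mom: "lesssim (\<lambda>n. moment 2 n (m n) (f n)) (\<lambda>n. moment 0 n (m n) (f n))"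
    and mu: "filterlim (\<lambda>n. ln (real n) - real (m n) / real n * moment 1 n (m n) (f n))
               at_bot sequentially"
  shows "(\<lambda>n. prob_connected n (m n) (f n)) \<longlonglongrightarrow> 1"
proof -
  define L where "L n = real (m n) / real n * moment 1 n (m n) (f n)" for n
  define r1 where "r1 n = real n * exp (1/2 - L n)" for n
  obtain K where "0 < K"
    and K: "eventually (\<lambda>n. moment 2 n (m n) (f n) \<le> K * moment 0 n (m n) (f n)) sequentially"
    using moment2_le_mult_moment0_of_lesssim[OF dist mom] by blast
  define r2 where "r2 n = exp 1 * K * L n * exp (- (2 * L n / K))" for n
  have "filterlim (\<lambda>n. ln (real n) - L n) at_bot sequentially"
    using mu by (simp add: L_def)
  then have r1: "r1 \<longlonglongrightarrow> 0" and r2: "r2 \<longlonglongrightarrow> 0"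
    unfolding r1_def[abs_def] r2_def[abs_def] using \<open>0 < K\<close> by (rule prob_connected_error_terms_tendsto_0)+
  have "(\<lambda>n. 1 - 4 * r1 n - 4 * r2 n) \<longlonglongrightarrow> 1 - 4 * 0 - 4 * 0"
    by (intro tendsto_diff tendsto_mult tendsto_const r1 r2)
  then have lower: "(\<lambda>n. 1 - 4 * r1 n - 4 * r2 n) \<longlonglongrightarrow> 1" by simp
  have "eventually (\<lambda>n. 1 - 4 * r1 n - 4 * r2 n \<le> prob_connected n (m n) (f n)) sequentially"
    using K order_tendstoD(2)[OF r1 half_gt_zero[OF zero_less_one]]
      order_tendstoD(2)[OF r2 half_gt_zero[OF zero_less_one]]
      eventually_ge_at_top[of 2]
  proof eventually_elim
    case (elim n)
    have "is_dist_family n (m n) (f n)" using dist elim by simp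
    from prob_connected_ge[OF _ this \<open>0 < K\<close> _ L_def] elim show ?case
      unfolding r1_def r2_def by linarith
  qed
  moreover have "eventually (\<lambda>n. prob_connected n (m n) (f n) \<le> 1) sequentially"
    using eventually_ge_at_top[of 1] by eventually_elim (rule prob_connected_le_1[OF dist])
  ultimately show ?thesis
    using lower by (rule tendsto_sandwich[OF _ _ _ tendsto_const])
qed

end
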